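(* For all terms $q,q'$ the following are equivalent: (1) $q=_{\mathrm{CLC}_0}q'$; (2) $q=_{\mathrm{CLC}}q'$; (3) $q=_{\mathrm{CLC}^+}q'$.
   Context: Terms are built from variables and the constants $C,T,F,K,S$ by binary application (left-associative). $\mathrm{CLC}_0$ is the (unconditional) term rewriting system with rules $C\,T\,x\,y\to x$; $C\,F\,x\,y\to y$; $C\,z\,x\,x\to x$; $K\,x\,y\to x$; $S\,x\,y\,z\to x\,z\,(y\,z)$. $\mathrm{CLC}$ is the conditional system with rules $C\,T\,x\,y\to x$; $C\,F\,x\,y\to y$; $C\,z\,x\,y\to x \Leftarrow x=y$; $K\,x\,y\to x$; $S\,x\,y\,z\to x\,z\,(y\,z)$, where $=$ is convertibility in the system itself, defined by levels: $R_0$ interprets the condition as the empty relation, $R_{n+1}$ interprets $=$ as the conversion relation of $\to_{R_n}$, and $\to_{\mathrm{CLC}}=\bigcup_n\to_{R_n}$. $\mathrm{CLC}^+$ is defined in the same way from the rules of $\mathrm{CLC}$ plus $C\,z\,x\,y\to y\Leftarrow x=y$. For a system $R$, $=_R$ denotes the conversion relation (reflexive–symmetric–transitive closure of one-step rewriting closed under contexts). *)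

theory Defs
  imports Main
begin

datatype 'v trm = Var 'v | CC | TT | FF | KK | SS | App "'v trm" "'v trm"

inductive ctx_step :: "('v trm \<Rightarrow> 'v trm \<Rightarrow> bool) \<Rightarrow> 'v trm \<Rightarrow> 'v trm \<Rightarrow> bool"
  for R where
  root: "R s t \<Longrightarrow> ctx_step R s t"
| appL: "ctx_step R s t \<Longrightarrow> ctx_step R (App s u) (App t u)"
| appR: "ctx_step R s t \<Longrightarrow> ctx_step R (App u s) (App u t)"

text \<open>Root steps of CLC_0 (rule variables range over all terms = all substitution instances).\<close>
inductive root_CLC0 :: "'v trm \<Rightarrow> 'v trm \<Rightarrow> bool" where
  "root_CLC0 (App (App (App CC TT) x) y) x"
| "root_CLC0 (App (App (App CC FF) x) y) y"
| "root_CLC0 (App (App (App CC z) x) x) x"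
| "root_CLC0 (App (App KK x) y) x"
| "root_CLC0 (App (App (App SS x) y) z) (App (App x z) (App y z))"

definition step_CLC0 :: "'v trm \<Rightarrow> 'v trm \<Rightarrow> bool" where
  "step_CLC0 = ctx_step root_CLC0"

text \<open>Root steps of CLC, with the condition x = y interpreted by the relation E.\<close>
inductive root_CLC :: "('v trm \<Rightarrow> 'v trm \<Rightarrow> bool) \<Rightarrow> 'v trm \<Rightarrow> 'v trm \<Rightarrow> bool"
  for E where
  "root_CLC E (App (App (App CC TT) x) y) x"
| "root_CLC E (App (App (App CC FF) x) y) y"
| "E x y \<Longrightarrow> root_CLC E (App (App (App CC z) x) y) x"
| "root_CLC E (App (App KK x) y) x"
| "root_CLC E (App (App (App SS x) y) z) (App (App x z) (App y z))"

inductive root_CLCp :: "('v trm \<Rightarrow> 'v trm \<Rightarrow> bool) \<Rightarrow> 'v trm \<Rightarrow> 'v trm \<Rightarrow> bool"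
  for E where
  "root_CLCp E (App (App (App CC TT) x) y) x"
| "root_CLCp E (App (App (App CC FF) x) y) y"
| "E x y \<Longrightarrow> root_CLCp E (App (App (App CC z) x) y) x"
| "E x y \<Longrightarrow> root_CLCp E (App (App (App CC z) x) y) y"
| "root_CLCp E (App (App KK x) y) x"
| "root_CLCp E (App (App (App SS x) y) z) (App (App x z) (App y z))"

fun level_CLC :: "nat \<Rightarrow> 'v trm \<Rightarrow> 'v trm \<Rightarrow> bool" where
  "level_CLC 0 = ctx_step (root_CLC (\<lambda>_ _. False))"
| "level_CLC (Suc n) = ctx_step (root_CLC (equivclp (level_CLC n)))"

fun level_CLCp :: "nat \<Rightarrow> 'v trm \<Rightarrow> 'v trm \<Rightarrow> bool" where
  "level_CLCp 0 = ctx_step (root_CLCp (\<lambda>_ _. False))"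
| "level_CLCp (Suc n) = ctx_step (root_CLCp (equivclp (level_CLCp n)))"

definition step_CLC :: "'v trm \<Rightarrow> 'v trm \<Rightarrow> bool" where
  "step_CLC s t \<longleftrightarrow> (\<exists>n. level_CLC n s t)"

definition step_CLCp :: "'v trm \<Rightarrow> 'v trm \<Rightarrow> bool" where
  "step_CLCp s t \<longleftrightarrow> (\<exists>n. level_CLCp n s t)"

end

theory Submission
  imports Defs
begin

text \<open>Every conditional rule of CLC and CLC+ is a derived conversion of CLC_0:
  if x and y are convertible, then C z x y is convertible to C z y y and to C z x x,
  which rewrite to y and x by the unconditional rule C z x x \<rightarrow> x. By induction on
  the level, each step of CLC+ is therefore a CLC_0-conversion. Conversely CLC_0 steps
  are steps of level 1 of CLC (its condition holds reflexively), and CLC is contained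
  in CLC+, so the three conversions coincide.\<close>

lemma equivclp_le_equivclp:
  assumes "r \<le> equivclp r'"
  shows "equivclp r \<le> equivclp r'"
proof (intro predicate2I)
  fix a b
  assume "equivclp r a b"
  then show "equivclp r' a b"
  proof (induction rule: equivclp_induct)
    case (step y z)
    then have "equivclp r' y z"
      using assms by (auto intro: equivclp_sym)
    with step.IH show ?case by (rule equivclp_trans)
  qed simp
qed

lemma equivclp_mono:
  assumes "r \<le> r'"
  shows "equivclp r \<le> equivclp r'"
  using assms by (intro equivclp_le_equivclp) (auto intro: r_into_equivclp)

lemma equivclp_map:
  assumes "equivclp r a b" and "\<And>x y. r x y \<Longrightarrow> r' (f x) (f y)"
  shows "equivclp r' (f a) (f b)"
  using assms(1)
proof (induction rule: equivclp_induct)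
  case (step y z)
  then have "equivclp r' (f y) (f z)"
    using assms(2) by (auto intro: equivclp_sym)
  with step.IH show ?case by (rule equivclp_trans)
qed simp

lemma ctx_step_mono:
  assumes "R \<le> R'"
  shows "ctx_step R \<le> ctx_step R'"
proof (intro predicate2I)
  fix s t
  show "ctx_step R s t \<Longrightarrow> ctx_step R' s t"
    by (induction rule: ctx_step.induct) (use assms in \<open>auto intro: ctx_step.intros\<close>)
qed

lemma equivclp_ctx_step_appL:
  "equivclp (ctx_step R) a b \<Longrightarrow> equivclp (ctx_step R) (App a u) (App b u)"
  by (erule equivclp_map) (rule ctx_step.appL)

lemma equivclp_ctx_step_appR:
  "equivclp (ctx_step R) a b \<Longrightarrow> equivclp (ctx_step R) (App u a) (App u b)"
  by (erule equivclp_map) (rule ctx_step.appR)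

lemma ctx_step_le_equivclp_ctx_step:
  assumes "R \<le> equivclp (ctx_step R')"
  shows "ctx_step R \<le> equivclp (ctx_step R')"
proof (intro predicate2I)
  fix s t
  show "ctx_step R s t \<Longrightarrow> equivclp (ctx_step R') s t"
    by (induction rule: ctx_step.induct)
      (use assms in \<open>auto intro: equivclp_ctx_step_appL equivclp_ctx_step_appR\<close>)
qed

lemma root_CLC0_conversion: "root_CLC0 s t \<Longrightarrow> equivclp step_CLC0 s t"
  by (auto simp: step_CLC0_def intro: ctx_step.root)

lemma root_CLCp_le_conversion_CLC0:
  assumes cond: "E \<le> equivclp step_CLC0"
  shows "root_CLCp E \<le> equivclp step_CLC0"
proof (intro predicate2I)
  fix s t
  assume "root_CLCp E s t"
  then show "equivclp step_CLC0 s t"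
  proof (cases rule: root_CLCp.cases)
    case (3 y z)
    have "equivclp step_CLC0 (App (App (App CC z) t) y) (App (App (App CC z) t) t)"
      using cond 3(2) unfolding step_CLC0_def
      by (auto intro: equivclp_ctx_step_appR equivclp_sym)
    also have "equivclp step_CLC0 \<dots> t"
      by (intro root_CLC0_conversion root_CLC0.intros)
    finally show ?thesis using 3(1) by simp
  next
    case (4 x z)
    have "equivclp step_CLC0 (App (App (App CC z) x) t) (App (App (App CC z) t) t)"
      using cond 4(2) unfolding step_CLC0_def
      by (auto intro: equivclp_ctx_step_appL equivclp_ctx_step_appR)
    also have "equivclp step_CLC0 \<dots> t"
      by (intro root_CLC0_conversion root_CLC0.intros)
    finally show ?thesis using 4(1) by simp
  qed (auto intro: root_CLC0_conversion root_CLC0.intros)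
qed

lemma level_CLCp_le_conversion_CLC0: "level_CLCp n \<le> equivclp step_CLC0"
proof (induction n)
  case 0
  show ?case
    unfolding level_CLCp.simps step_CLC0_def
    by (intro ctx_step_le_equivclp_ctx_step root_CLCp_le_conversion_CLC0[unfolded step_CLC0_def])
      auto
next
  case (Suc n)
  from equivclp_le_equivclp[OF Suc.IH] show ?case
    unfolding level_CLCp.simps step_CLC0_def
    by (intro ctx_step_le_equivclp_ctx_step root_CLCp_le_conversion_CLC0[unfolded step_CLC0_def])
qed

lemma level_CLC_le_level_CLCp: "level_CLC n \<le> level_CLCp n"
proof (induction n)
  case 0
  show ?case
    by (simp, rule ctx_step_mono) (auto elim: root_CLC.cases intro: root_CLCp.intros)
next
  case (Suc n)
  from equivclp_mono[OF Suc.IH] show ?case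
    by (simp, intro ctx_step_mono) (auto elim!: root_CLC.cases intro: root_CLCp.intros)
qed

lemma step_CLC0_le_level_CLC_1: "step_CLC0 \<le> level_CLC 1"
  unfolding step_CLC0_def
  by (simp, rule ctx_step_mono) (auto elim!: root_CLC0.cases intro: root_CLC.intros)

theorem mainTheorem2:
  fixes q q' :: "'v trm"
  shows "(equivclp step_CLC0 q q' \<longleftrightarrow> equivclp step_CLC q q')
       \<and> (equivclp step_CLC q q' \<longleftrightarrow> equivclp step_CLCp q q')"
proof -
  have "step_CLC0 \<le> step_CLC"
    using step_CLC0_le_level_CLC_1 unfolding step_CLC_def by blast
  then have CLC0_CLC: "equivclp step_CLC0 \<le> equivclp step_CLC"
    by (rule equivclp_mono)
  have "step_CLC \<le> step_CLCp"
    using level_CLC_le_level_CLCp by (fastforce simp: step_CLC_def step_CLCp_def)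
  then have CLC_CLCp: "equivclp step_CLC \<le> equivclp step_CLCp"
    by (rule equivclp_mono)
  have "step_CLCp \<le> equivclp step_CLC0"
    using level_CLCp_le_conversion_CLC0 by (fastforce simp: step_CLCp_def)
  then have CLCp_CLC0: "equivclp step_CLCp \<le> equivclp step_CLC0"
    by (rule equivclp_le_equivclp)
  show ?thesis
    using CLC0_CLC CLC_CLCp CLCp_CLC0 by (blast dest: predicate2D)
qed

end
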